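(* Let $\varepsilon$ be a locally variational source form on $\mathbb{R}\times T^2M$ and let $\alpha'$ be the $2$-form on $T^1M$ given in charts by $\alpha'=\tfrac12 D\,dx\wedge dy+(B_{xx}dx+B_{xy}dy)\wedge d\dot x+(B_{xy}dx+B_{yy}dy)\wedge d\dot y$. Then in every fibered chart $(t,x,y)$ (on its domain) one has $\alpha'-\omega=d\kappa$, where $$\omega=\tfrac12\,D(x,y,0,0)\,dx\wedge dy,$$ $$\kappa=-\Big(\int_0^{\dot x}B_{xx}(x,y,\nu,\dot y)\,d\nu+\int_0^{\dot y}B_{xy}(x,y,0,\sigma)\,d\sigma\Big)dx-\Big(\int_0^{\dot x}B_{xy}(x,y,\nu,\dot y)\,d\nu+\int_0^{\dot y}B_{yy}(x,y,0,\sigma)\,d\sigma\Big)dy.$$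
   Context: Setting: $M$ is a smooth connected $2$-manifold, $Y=\mathbb{R}\times M$; $J^{1}Y\cong\mathbb{R}\times T^{1}M$, $J^{2}Y\cong\mathbb{R}\times T^{2}M$, with chart coordinates $(t,x,y,\dot x,\dot y)$, $(t,x,y,\dot x,\dot y,\ddot x,\ddot y)$ induced by charts $(x,y)$ on $M$; charts are assumed to have domains on which the segment integrals below make sense (e.g. rectangular in the velocity variables). Contact forms $\omega^x=dx-\dot x dt$, $\omega^y=dy-\dot y dt$. A source form $\varepsilon=(\varepsilon_x\omega^x+\varepsilon_y\omega^y)\wedge dt$ on $\mathbb{R}\times T^2M$ is locally variational iff locally it is the Euler–Lagrange form of a first-order Lagrangian; equivalently in every chart $\varepsilon_x=A_x+B_{xx}\ddot x+B_{xy}\ddot y$, $\varepsilon_y=A_y+B_{xy}\ddot x+B_{yy}\ddot y$ with $A_x,A_y,B_{xx},B_{xy},B_{yy}$ functions of $(x,y,\dot x,\dot y)$ satisfying the Helmholtz conditions: $\partial B_{xx}/\partial\dot y=\partial B_{xy}/\partial\dot x$, $\partial B_{yy}/\partial\dot x=\partial B_{xy}/\partial\dot y$, $\partial A_x/\partial\dot x-\dot x\,\partial B_{xx}/\partial x-\dot y\,\partial B_{xx}/\partial y=0$, $\partial A_y/\partial\dot y-\dot x\,\partial B_{yy}/\partial x-\dot y\,\partial B_{yy}/\partial y=0$, $\partial A_x/\partial\dot y+\partial A_y/\partial\dot x-2\dot x\,\partial B_{xy}/\partial x-2\dot y\,\partial B_{xy}/\partial y=0$, $\partial A_x/\partial y-\partial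 A_y/\partial x-\frac12\dot x\,\partial_x D-\frac12\dot y\,\partial_y D=0$, where $D=\partial A_x/\partial\dot y-\partial A_y/\partial\dot x$ (a function of $(x,y,\dot x,\dot y)$). *)

theory Defs
  imports "HOL-Analysis.Analysis"
begin

text \<open>A fibred chart of J1Y = R x T1M gives coordinates
 (t, x, y, xd, yd); all objects below are t-independent and live on the domain
 U (a subset of R^4) of the induced chart on T1M with coordinates numbered
 0 = x, 1 = y, 2 = xd (x-dot), 3 = yd (y-dot).\<close>

type_synonym chartfun = "real \<Rightarrow> real \<Rightarrow> real \<Rightarrow> real \<Rightarrow> real"

definition pd :: "nat \<Rightarrow> chartfun \<Rightarrow> chartfun" where
  "pd i f x y u v =
     (if i = 0 then deriv (\<lambda>s. f s y u v) x
      else if i = 1 then deriv (\<lambda>s. f x s u v) y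
      else if i = 2 then deriv (\<lambda>s. f x y s v) u
      else deriv (\<lambda>s. f x y u s) v)"

definition pdiff :: "nat \<Rightarrow> chartfun \<Rightarrow> real \<Rightarrow> real \<Rightarrow> real \<Rightarrow> real \<Rightarrow> bool" where
  "pdiff i f x y u v =
     (if i = 0 then (\<lambda>s. f s y u v) differentiable (at x)
      else if i = 1 then (\<lambda>s. f x s u v) differentiable (at y)
      else if i = 2 then (\<lambda>s. f x y s v) differentiable (at u)
      else (\<lambda>s. f x y u s) differentiable (at v))"

fun ipd :: "nat list \<Rightarrow> chartfun \<Rightarrow> chartfun" where
  "ipd [] f = f"
| "ipd (i # is) f = pd i (ipd is f)"

definition smooth_chart :: "(real \<times> real \<times> real \<times> real) set \<Rightarrow> chartfun \<Rightarrow> bool" where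
  "smooth_chart U f \<longleftrightarrow>
     (\<forall>is. continuous_on U (\<lambda>(x, y, u, v). ipd is f x y u v) \<and>
        (\<forall>i<4. \<forall>(x, y, u, v)\<in>U. pdiff i (ipd is f) x y u v))"

definition oint :: "real \<Rightarrow> real \<Rightarrow> (real \<Rightarrow> real) \<Rightarrow> real" where
  "oint a b f = (if a \<le> b then integral {a..b} f else - integral {b..a} f)"

text \<open>Differential forms on U in the coordinates (x, y, xd, yd):
  a 1-form is given by its coefficients (k i) of dq_i, i < 4;
  a 2-form by its coefficient array (w i j), w antisymmetric, representing
  sum over i<j of w i j dq_i wedge dq_j.\<close>
type_synonym form1 = "nat \<Rightarrow> chartfun"
type_synonym form2 = "nat \<Rightarrow> nat \<Rightarrow> chartfun"

definition dq :: "nat \<Rightarrow> form1" where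
  "dq k = (\<lambda>i x y u v. if i = k then 1 else 0)"

definition fscale1 :: "chartfun \<Rightarrow> form1 \<Rightarrow> form1" where
  "fscale1 g a = (\<lambda>i x y u v. g x y u v * a i x y u v)"

definition fscale2 :: "chartfun \<Rightarrow> form2 \<Rightarrow> form2" where
  "fscale2 g w = (\<lambda>i j x y u v. g x y u v * w i j x y u v)"

definition add1 :: "form1 \<Rightarrow> form1 \<Rightarrow> form1" where
  "add1 a b = (\<lambda>i x y u v. a i x y u v + b i x y u v)"

definition add2 :: "form2 \<Rightarrow> form2 \<Rightarrow> form2" where
  "add2 a b = (\<lambda>i j x y u v. a i j x y u v + b i j x y u v)"

definition diff2 :: "form2 \<Rightarrow> form2 \<Rightarrow> form2" where
  "diff2 a b = (\<lambda>i j x y u v. a i j x y u v - b i j x y u v)"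

definition wedge :: "form1 \<Rightarrow> form1 \<Rightarrow> form2" where
  "wedge a b = (\<lambda>i j x y u v. a i x y u v * b j x y u v - a j x y u v * b i x y u v)"

definition ext_d :: "form1 \<Rightarrow> form2" where
  "ext_d k = (\<lambda>i j. pd i (k j) - pd j (k i))"

definition eq2_on :: "(real \<times> real \<times> real \<times> real) set \<Rightarrow> form2 \<Rightarrow> form2 \<Rightarrow> bool" where
  "eq2_on U a b \<longleftrightarrow> (\<forall>i<4. \<forall>j<4. \<forall>(x, y, u, v)\<in>U. a i j x y u v = b i j x y u v)"

text \<open>Admissible chart domain: open, and containing the segments used in the
  integrals (in particular every domain rectangular in the velocity variables
  containing 0 in the velocity rectangle).\<close>
definition admissible_domain :: "(real \<times> real \<times> real \<times> real) set \<Rightarrow> bool" where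
  "admissible_domain U \<longleftrightarrow> open U \<and>
     (\<forall>(x, y, u, v)\<in>U. (\<forall>n\<in>closed_segment 0 u. (x, y, n, v) \<in> U) \<and>
                       (\<forall>s\<in>closed_segment 0 v. (x, y, 0, s) \<in> U))"

definition Dfun :: "chartfun \<Rightarrow> chartfun \<Rightarrow> chartfun" where
  "Dfun Ax Ay = (\<lambda>x y u v. pd 3 Ax x y u v - pd 2 Ay x y u v)"

definition helmholtz :: "(real \<times> real \<times> real \<times> real) set \<Rightarrow>
    chartfun \<Rightarrow> chartfun \<Rightarrow> chartfun \<Rightarrow> chartfun \<Rightarrow> chartfun \<Rightarrow> bool" where
  "helmholtz U Ax Ay Bxx Bxy Byy \<longleftrightarrow>
    (\<forall>(x, y, u, v)\<in>U.
       pd 3 Bxx x y u v = pd 2 Bxy x y u v \<and>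
       pd 2 Byy x y u v = pd 3 Bxy x y u v \<and>
       pd 2 Ax x y u v - u * pd 0 Bxx x y u v - v * pd 1 Bxx x y u v = 0 \<and>
       pd 3 Ay x y u v - u * pd 0 Byy x y u v - v * pd 1 Byy x y u v = 0 \<and>
       pd 3 Ax x y u v + pd 2 Ay x y u v - 2 * u * pd 0 Bxy x y u v
          - 2 * v * pd 1 Bxy x y u v = 0 \<and>
       pd 1 Ax x y u v - pd 0 Ay x y u v - 1/2 * u * pd 0 (Dfun Ax Ay) x y u v
          - 1/2 * v * pd 1 (Dfun Ax Ay) x y u v = 0)"

definition alpha' :: "chartfun \<Rightarrow> chartfun \<Rightarrow> chartfun \<Rightarrow> chartfun \<Rightarrow> chartfun \<Rightarrow> form2" where
  "alpha' Ax Ay Bxx Bxy Byy =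
     add2 (fscale2 (\<lambda>x y u v. 1/2 * Dfun Ax Ay x y u v) (wedge (dq 0) (dq 1)))
      (add2 (wedge (add1 (fscale1 Bxx (dq 0)) (fscale1 Bxy (dq 1))) (dq 2))
            (wedge (add1 (fscale1 Bxy (dq 0)) (fscale1 Byy (dq 1))) (dq 3)))"

definition omega0 :: "chartfun \<Rightarrow> chartfun \<Rightarrow> form2" where
  "omega0 Ax Ay = fscale2 (\<lambda>x y u v. 1/2 * Dfun Ax Ay x y 0 0) (wedge (dq 0) (dq 1))"

definition kappa :: "chartfun \<Rightarrow> chartfun \<Rightarrow> chartfun \<Rightarrow> form1" where
  "kappa Bxx Bxy Byy =
     add1 (fscale1 (\<lambda>x y u v. - (oint 0 u (\<lambda>n. Bxx x y n v) + oint 0 v (\<lambda>s. Bxy x y 0 s))) (dq 0))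
          (fscale1 (\<lambda>x y u v. - (oint 0 u (\<lambda>n. Bxy x y n v) + oint 0 v (\<lambda>s. Byy x y 0 s))) (dq 1))"

end

theory Submission
  imports Defs
begin

text \<open>
  The coefficients of kappa are chosen so that differentiating in the velocities returns the B's:
  the xd-derivative by the fundamental theorem of calculus, the yd-derivative by differentiating
  under the integral sign and using the Helmholtz condition dBxx/dyd = dBxy/dxd.
  The dx^dy coefficient of d kappa is the integral, along the path (0,0) -> (0,yd) -> (xd,yd) in
  the velocity plane, of the field (dBxx/dy - dBxy/dx, dBxy/dy - dByy/dx). Differentiating the
  remaining Helmholtz conditions and using the symmetry of second derivatives shows that this
  field is half the velocity gradient of D, so the integral is (D - D(x,y,0,0))/2.
\<close>

lemma closed_segment_real: "closed_segment a (b::real) = {min a b .. max a b}"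
  by (auto simp: closed_segment_eq_real_ivl)

lemma oint_ftc:
  assumes "\<And>n. n \<in> closed_segment a b \<Longrightarrow> (F has_real_derivative f n) (at n)"
  shows "oint a b f = F b - F a"
proof (cases "a \<le> b")
  case True
  have "(f has_integral (F b - F a)) {a..b}"
    by (rule fundamental_theorem_of_calculus[OF True])
       (use assms True in \<open>auto simp: closed_segment_real has_real_derivative_iff_has_vector_derivative[symmetric]
            intro: has_field_derivative_at_within\<close>)
  thus ?thesis using True by (simp add: oint_def integral_unique)
next
  case False
  have "(f has_integral (F a - F b)) {b..a}"
    by (rule fundamental_theorem_of_calculus)
       (use assms False in \<open>auto simp: closed_segment_real has_real_derivative_iff_has_vector_derivative[symmetric]
            intro: has_field_derivative_at_within\<close>)
  thus ?thesis using False by (simp add: oint_def integral_unique)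
qed

lemma oint_cong:
  assumes "\<And>n. n \<in> closed_segment a b \<Longrightarrow> f n = g n"
  shows "oint a b f = oint a b g"
  using assms unfolding oint_def closed_segment_real
  by (auto intro!: integral_cong simp: min_def max_def split: if_splits)

lemma oint_diff:
  assumes "continuous_on (closed_segment a b) f" "continuous_on (closed_segment a b) g"
  shows "oint a b (\<lambda>n. f n - g n) = oint a b f - oint a b g"
  using assms unfolding oint_def closed_segment_real
  by (auto simp: min_def max_def integral_diff integrable_continuous_real split: if_splits)

lemma open_contains_thickened_segment:
  assumes "open S" "closed_segment a b \<subseteq> S"
  obtains e :: real where "e > 0" "{min a b - e .. max a b + e} \<subseteq> S"
proof -
  have "min a b \<in> S" "max a b \<in> S"
    using assms(2) by (auto simp: closed_segment_real)
  then obtain e1 e2 where e: "e1 > 0" "ball (min a b) e1 \<subseteq> S" "e2 > 0" "ball (max a b) e2 \<subseteq> S"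
    using assms(1) open_contains_ball by meson
  show ?thesis
  proof (rule that[of "min e1 e2 / 2"])
    show "{min a b - min e1 e2 / 2 .. max a b + min e1 e2 / 2} \<subseteq> S"
    proof
      fix n assume n: "n \<in> {min a b - min e1 e2 / 2 .. max a b + min e1 e2 / 2}"
      consider "n < min a b" | "n \<in> {min a b .. max a b}" | "max a b < n" by force
      thus "n \<in> S"
        by cases (use n e assms(2) in \<open>auto simp: closed_segment_real dist_real_def\<close>)
    qed
  qed (use e in auto)
qed

lemma oint_has_derivative_upper:
  assumes "open S" "closed_segment a b \<subseteq> S" "continuous_on S f"
  shows "((\<lambda>w. oint a w f) has_real_derivative f b) (at b)"
proof -
  obtain e where e: "e > 0" "{min a b - e .. max a b + e} \<subseteq> S"
    using open_contains_thickened_segment[OF assms(1,2)] .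
  define c d where "c = min a b - e" and "d = max a b + e"
  have cd: "c < b" "b < d" "c \<le> a" "a \<le> d" using e by (auto simp: c_def d_def)
  have cont: "continuous_on {c..d} f"
    using continuous_on_subset[OF assms(3)] e by (simp add: c_def d_def)
  have eq: "oint a w f = integral {c..w} f - integral {c..a} f" if "w \<in> {c..d}" for w
  proof (cases "a \<le> w")
    case True
    have "integral {c..a} f + integral {a..w} f = integral {c..w} f"
      by (rule Henstock_Kurzweil_Integration.integral_combine)
         (use True that cd in \<open>auto intro!: integrable_continuous_real continuous_on_subset[OF cont]\<close>)
    thus ?thesis using True by (simp add: oint_def)
  next
    case False
    have "integral {c..w} f + integral {w..a} f = integral {c..a} f"
      by (rule Henstock_Kurzweil_Integration.integral_combine)
         (use False that cd in \<open>auto intro!: integrable_continuous_real continuous_on_subset[OF cont]\<close>)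
    thus ?thesis using False by (simp add: oint_def)
  qed
  have "((\<lambda>w. integral {c..w} f) has_real_derivative f b) (at b)"
    using integral_has_real_derivative[OF cont, of b] at_within_Icc_at[OF cd(1,2)] cd by simp
  hence d: "((\<lambda>w. integral {c..w} f - integral {c..a} f) has_real_derivative f b) (at b)"
    by (auto intro!: derivative_eq_intros)
  thus ?thesis
    by (rule has_field_derivative_transform_within_open[of _ _ _ "{c<..<d}"]) (use cd eq in auto)
qed

lemma oint_has_derivative_param:
  fixes g gw :: "real \<Rightarrow> real \<Rightarrow> real"
  assumes W: "open W" "{w0} \<times> closed_segment a b \<subseteq> W"
    and deriv: "\<And>w n. (w, n) \<in> W \<Longrightarrow> ((\<lambda>w. g w n) has_real_derivative gw w n) (at w)"
    and cont_g: "continuous_on W (\<lambda>(w, n). g w n)"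
    and cont_gw: "continuous_on W (\<lambda>(w, n). gw w n)"
  shows "((\<lambda>w. oint a b (g w)) has_real_derivative oint a b (gw w0)) (at w0)"
proof -
  obtain X where X: "w0 \<in> X" "open X" "X \<times> closed_segment a b \<subseteq> W"
    using Elementary_Topology.tube_lemma[OF compact_segment W] by blast
  then obtain e where e: "e > 0" "ball w0 e \<subseteq> X" using open_contains_ball by blast
  define l h where "l = min a b" and "h = max a b"
  have seg: "cbox l h = closed_segment a b" by (simp add: l_def h_def closed_segment_real)
  have sub: "ball w0 e \<times> cbox l h \<subseteq> W" using X e seg by blast
  have w0: "w0 \<in> ball w0 e" using e by simp
  have "((\<lambda>w. integral (cbox l h) (g w)) has_field_derivative integral (cbox l h) (gw w0))
      (at w0 within ball w0 e)"
  proof (rule leibniz_rule_field_derivative[OF _ _ _ w0 convex_ball])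
    fix w n assume "w \<in> ball w0 e" "n \<in> cbox l h"
    thus "((\<lambda>w. g w n) has_field_derivative gw w n) (at w within ball w0 e)"
      using deriv sub by (blast intro: has_field_derivative_at_within)
  next
    fix w assume "w \<in> ball w0 e"
    hence "continuous_on (cbox l h) ((\<lambda>(w, n). g w n) \<circ> Pair w)"
      using sub by (intro continuous_on_compose continuous_intros continuous_on_subset[OF cont_g]) auto
    thus "g w integrable_on cbox l h" by (simp add: o_def cbox_interval integrable_continuous_real)
  next
    show "continuous_on (ball w0 e \<times> cbox l h) (\<lambda>(w, n). gw w n)"
      using continuous_on_subset[OF cont_gw sub] .
  qed
  hence "((\<lambda>w. integral {l..h} (g w)) has_real_derivative integral {l..h} (gw w0)) (at w0)"
    by (simp add: at_within_open[OF w0] cbox_interval)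
  from this DERIV_minus[OF this] show ?thesis
    by (cases "a \<le> b") (simp_all add: oint_def l_def h_def)
qed

lemma continuous_on_swap_args:
  assumes "continuous_on (A \<times> B) (\<lambda>(s, t). h s t)"
  shows "continuous_on (B \<times> A) (\<lambda>(t, s). h s t)"
  using continuous_on_compose[OF continuous_on_swap[of "B \<times> A"], of "\<lambda>(s, t). h s t"] assms
  by (simp add: o_def split_beta product_swap)

lemma mixed_partials_eq:
  fixes g gx gy gxy :: "real \<Rightarrow> real \<Rightarrow> real"
  assumes e: "e > 0"
    and gx: "\<And>s t. s \<in> ball a e \<Longrightarrow> t \<in> ball b e \<Longrightarrow> ((\<lambda>s. g s t) has_real_derivative gx s t) (at s)"
    and gy: "\<And>s t. s \<in> ball a e \<Longrightarrow> t \<in> ball b e \<Longrightarrow> ((\<lambda>t. g s t) has_real_derivative gy s t) (at t)"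
    and gxy: "\<And>s t. s \<in> ball a e \<Longrightarrow> t \<in> ball b e \<Longrightarrow> ((\<lambda>t. gx s t) has_real_derivative gxy s t) (at t)"
    and cont_gx: "continuous_on (ball a e \<times> ball b e) (\<lambda>(s, t). gx s t)"
    and cont_gxy: "continuous_on (ball a e \<times> ball b e) (\<lambda>(s, t). gxy s t)"
    and gyx: "((\<lambda>s. gy s b) has_real_derivative gyx) (at a)"
  shows "gyx = gxy a b"
proof -
  have a: "a \<in> ball a e" and b: "b \<in> ball b e" using e by auto
  have seg: "closed_segment a s \<subseteq> ball a e" if "s \<in> ball a e" for s
    using a that by (simp add: closed_segment_subset)
  have ftc: "g s t - g a t = oint a s (\<lambda>r. gx r t)" if s: "s \<in> ball a e" and t: "t \<in> ball b e" for s t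
    by (rule oint_ftc[symmetric]) (use gx seg[OF s] t in blast)
  have inner: "gy s b - gy a b = oint a s (\<lambda>r. gxy r b)" if s: "s \<in> ball a e" for s
  proof -
    have "((\<lambda>t. oint a s (\<lambda>r. gx r t)) has_real_derivative oint a s (\<lambda>r. gxy r b)) (at b)"
    proof (rule oint_has_derivative_param[where W = "ball b e \<times> ball a e"])
      show "{b} \<times> closed_segment a s \<subseteq> ball b e \<times> ball a e" using b seg[OF s] by blast
    qed (use gxy continuous_on_swap_args[OF cont_gx] continuous_on_swap_args[OF cont_gxy] in \<open>auto intro: open_Times\<close>)
    hence "((\<lambda>t. g s t - g a t) has_real_derivative oint a s (\<lambda>r. gxy r b)) (at b)"
      by (rule has_field_derivative_transform_within_open[OF _ open_ball b]) (use ftc s in auto)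
    moreover have "((\<lambda>t. g s t - g a t) has_real_derivative gy s b - gy a b) (at b)"
      using gy[OF s b] gy[OF a b] by (rule DERIV_diff)
    ultimately show ?thesis using DERIV_unique by blast
  qed
  have cont_b: "continuous_on (ball a e) (\<lambda>r. gxy r b)"
    using continuous_on_compose[OF _ continuous_on_subset[OF cont_gxy], of "ball a e" "\<lambda>r. (r, b)"] b
    by (force simp: o_def intro: continuous_intros)
  have "((\<lambda>s. oint a s (\<lambda>r. gxy r b)) has_real_derivative gxy a b) (at a)"
    using oint_has_derivative_upper[OF open_ball _ cont_b] a by simp
  hence "((\<lambda>s. gy a b + oint a s (\<lambda>r. gxy r b)) has_real_derivative gxy a b) (at a)"
    by (auto intro!: derivative_eq_intros)
  hence "((\<lambda>s. gy s b) has_real_derivative gxy a b) (at a)"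
    by (rule has_field_derivative_transform_within_open[OF _ open_ball a]) (use inner in force)
  with gyx show ?thesis using DERIV_unique by blast
qed

lemma has_real_derivative_zero_if_vanishing_on:
  assumes U: "open U" and g: "\<forall>p\<in>U. g p = 0" and h: "continuous_on UNIV h" "h t \<in> U"
    and D: "((\<lambda>s. g (h s)) has_real_derivative D) (at t)"
  shows "D = 0"
proof -
  have "((\<lambda>s. 0) has_real_derivative D) (at t)"
    by (rule has_field_derivative_transform_within_open[OF D open_vimage[OF U h(1)]]) (use g h(2) in auto)
  thus ?thesis using DERIV_const DERIV_unique by blast
qed

definition uncurry4 :: "chartfun \<Rightarrow> real \<times> real \<times> real \<times> real \<Rightarrow> real" where
  "uncurry4 f = (\<lambda>(x, y, u, v). f x y u v)"

definition coord :: "nat \<Rightarrow> real \<times> real \<times> real \<times> real \<Rightarrow> real" where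
  "coord i = (\<lambda>(x, y, u, v). if i = 0 then x else if i = 1 then y else if i = 2 then u else v)"

definition coord_upd :: "nat \<Rightarrow> real \<Rightarrow> real \<times> real \<times> real \<times> real \<Rightarrow> real \<times> real \<times> real \<times> real" where
  "coord_upd i s = (\<lambda>(x, y, u, v).
     if i = 0 then (s, y, u, v) else if i = 1 then (x, s, u, v) else if i = 2 then (x, y, s, v) else (x, y, u, s))"

lemma uncurry4_apply [simp]: "uncurry4 f (x, y, u, v) = f x y u v"
  by (simp add: uncurry4_def)

lemma coord_apply [simp]:
  "coord i (x, y, u, v) = (if i = 0 then x else if i = 1 then y else if i = 2 then u else v)"
  by (simp add: coord_def)

lemma coord_upd_apply [simp]:
  "coord_upd i s (x, y, u, v) =
     (if i = 0 then (s, y, u, v) else if i = 1 then (x, s, u, v) else if i = 2 then (x, y, s, v) else (x, y, u, s))"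
  by (simp add: coord_upd_def)

lemma less_2_cases: "(i::nat) < 2 \<longleftrightarrow> i = 0 \<or> i = 1"
  by auto

lemma less_4_cases: "(i::nat) < 4 \<longleftrightarrow> i = 0 \<or> i = 1 \<or> i = 2 \<or> i = 3"
  by auto

lemma coord_coord_upd [simp]: "i < 4 \<Longrightarrow> k < 4 \<Longrightarrow> coord k (coord_upd i s q) = (if k = i then s else coord k q)"
  by (cases q) (auto simp: less_4_cases)

lemma coord_upd_coord [simp]: "coord_upd i (coord i q) q = q"
  by (cases q) auto

lemma coord_upd_idem [simp]: "coord_upd i s (coord_upd i t q) = coord_upd i s q"
  by (cases q) auto

lemma coord_upd_commute:
  "i < 4 \<Longrightarrow> j < 4 \<Longrightarrow> i \<noteq> j \<Longrightarrow> coord_upd i s (coord_upd j t q) = coord_upd j t (coord_upd i s q)"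
  by (cases q) (auto simp: less_4_cases)

lemma continuous_on_coord_upd2: "continuous_on S (\<lambda>(s, t). coord_upd j t (coord_upd i s q))"
  by (cases q; cases "i = 0"; cases "i = 1"; cases "i = 2"; cases "j = 0"; cases "j = 1"; cases "j = 2")
     (auto simp: split_beta intro!: continuous_intros)

lemma continuous_on_coord_upd: "continuous_on S (\<lambda>s. coord_upd i s q)"
  by (cases q; cases "i = 0"; cases "i = 1"; cases "i = 2") (auto intro!: continuous_intros)

lemma ipd_pd: "ipd is (pd i f) = ipd (is @ [i]) f"
  by (induction "is") auto

lemma smooth_chart_pd: "smooth_chart U f \<Longrightarrow> smooth_chart U (pd i f)"
  unfolding smooth_chart_def ipd_pd by blast

lemma smooth_chart_continuous_on: "smooth_chart U f \<Longrightarrow> continuous_on U (uncurry4 f)"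
  unfolding smooth_chart_def uncurry4_def by (metis ipd.simps(1))

lemma smooth_chart_has_real_derivative_pd:
  assumes "smooth_chart U f" "(x, y, u, v) \<in> U"
  shows "((\<lambda>s. f s y u v) has_real_derivative pd 0 f x y u v) (at x)"
    and "((\<lambda>s. f x s u v) has_real_derivative pd 1 f x y u v) (at y)"
    and "((\<lambda>s. f x y s v) has_real_derivative pd 2 f x y u v) (at u)"
    and "((\<lambda>s. f x y u s) has_real_derivative pd 3 f x y u v) (at v)"
proof -
  have "\<forall>i<4. pdiff i (ipd [] f) x y u v" using assms unfolding smooth_chart_def by blast
  hence "pdiff 0 f x y u v" "pdiff 1 f x y u v" "pdiff 2 f x y u v" "pdiff 3 f x y u v" by auto
  thus "((\<lambda>s. f s y u v) has_real_derivative pd 0 f x y u v) (at x)"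
    "((\<lambda>s. f x s u v) has_real_derivative pd 1 f x y u v) (at y)"
    "((\<lambda>s. f x y s v) has_real_derivative pd 2 f x y u v) (at u)"
    "((\<lambda>s. f x y u s) has_real_derivative pd 3 f x y u v) (at v)"
    unfolding pdiff_def pd_def by (auto simp: DERIV_deriv_iff_real_differentiable[symmetric])
qed

lemma smooth_chart_has_real_derivative_coord_upd:
  assumes "smooth_chart U f" "q \<in> U" "i < 4"
  shows "((\<lambda>s. uncurry4 f (coord_upd i s q)) has_real_derivative uncurry4 (pd i f) q) (at (coord i q))"
proof -
  obtain x y u v where "q = (x, y, u, v)" by (cases q)
  thus ?thesis
    using smooth_chart_has_real_derivative_pd[OF assms(1)] assms(2,3) by (auto simp: less_4_cases)
qed

lemma pd_commute:
  assumes U: "open U" and f: "smooth_chart U f" and p: "(x, y, u, v) \<in> U" and ij: "i < 4" "j < 4"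
  shows "pd i (pd j f) x y u v = pd j (pd i f) x y u v"
proof (cases "i = j")
  case False
  define q where "q = (x, y, u, v)"
  have q: "q \<in> U" using p by (simp add: q_def)
  define \<Phi> where "\<Phi> = (\<lambda>(s, t). coord_upd j t (coord_upd i s q))"
  have "open (\<Phi> -` U)"
    unfolding \<Phi>_def by (intro open_vimage U continuous_on_coord_upd2)
  moreover have "(coord i q, coord j q) \<in> \<Phi> -` U"
    using q by (simp add: \<Phi>_def)
  ultimately obtain A B where AB: "open A" "open B" "coord i q \<in> A" "coord j q \<in> B" "A \<times> B \<subseteq> \<Phi> -` U"
    by (rule open_prod_elim) auto
  obtain e1 e2 where e12: "e1 > 0" "ball (coord i q) e1 \<subseteq> A" "e2 > 0" "ball (coord j q) e2 \<subseteq> B"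
    using AB open_contains_ball by meson
  define e where "e = min e1 e2"
  have e: "e > 0" "ball (coord i q) e \<subseteq> A" "ball (coord j q) e \<subseteq> B"
    using e12 by (auto simp: e_def)
  have inU: "coord_upd j t (coord_upd i s q) \<in> U" if "s \<in> ball (coord i q) e" "t \<in> ball (coord j q) e" for s t
  proof -
    have "(s, t) \<in> \<Phi> -` U" using that e AB(5) by blast
    thus ?thesis by (simp add: \<Phi>_def)
  qed
  have img: "(\<lambda>(s, t). coord_upd j t (coord_upd i s q)) ` (ball (coord i q) e \<times> ball (coord j q) e) \<subseteq> U"
    using inU by auto
  have cont: "continuous_on (ball (coord i q) e \<times> ball (coord j q) e)
      (\<lambda>(s, t). uncurry4 h (coord_upd j t (coord_upd i s q)))" if "smooth_chart U h" for h
    using continuous_on_compose2[OF smooth_chart_continuous_on[OF that] continuous_on_coord_upd2 img]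
    by (simp add: split_beta)
  note deriv = smooth_chart_has_real_derivative_coord_upd[OF _ inU]
  have "uncurry4 (pd i (pd j f)) q = uncurry4 (pd j (pd i f)) (coord_upd j (coord j q) (coord_upd i (coord i q) q))"
  proof (rule mixed_partials_eq[where g = "\<lambda>s t. uncurry4 f (coord_upd j t (coord_upd i s q))"
        and gx = "\<lambda>s t. uncurry4 (pd i f) (coord_upd j t (coord_upd i s q))"
        and gy = "\<lambda>s t. uncurry4 (pd j f) (coord_upd j t (coord_upd i s q))"
        and gxy = "\<lambda>s t. uncurry4 (pd j (pd i f)) (coord_upd j t (coord_upd i s q))"
        and a = "coord i q" and b = "coord j q", OF e(1)])
    fix s t assume st: "s \<in> ball (coord i q) e" "t \<in> ball (coord j q) e"
    show "((\<lambda>s. uncurry4 f (coord_upd j t (coord_upd i s q))) has_real_derivative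
        uncurry4 (pd i f) (coord_upd j t (coord_upd i s q))) (at s)"
      using deriv[OF f st ij(1)] ij False by (simp add: coord_upd_commute)
    show "((\<lambda>t. uncurry4 f (coord_upd j t (coord_upd i s q))) has_real_derivative
        uncurry4 (pd j f) (coord_upd j t (coord_upd i s q))) (at t)"
      using deriv[OF f st ij(2)] ij by simp
    show "((\<lambda>t. uncurry4 (pd i f) (coord_upd j t (coord_upd i s q))) has_real_derivative
        uncurry4 (pd j (pd i f)) (coord_upd j t (coord_upd i s q))) (at t)"
      using deriv[OF smooth_chart_pd[OF f] st ij(2)] ij by simp
  next
    show "((\<lambda>s. uncurry4 (pd j f) (coord_upd j (coord j q) (coord_upd i s q))) has_real_derivative
        uncurry4 (pd i (pd j f)) q) (at (coord i q))"
      using smooth_chart_has_real_derivative_coord_upd[OF smooth_chart_pd[OF f] q ij(1)] ij False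
      by (simp add: coord_upd_commute)
  next
    show "continuous_on (ball (coord i q) e \<times> ball (coord j q) e)
        (\<lambda>(s, t). uncurry4 (pd i f) (coord_upd j t (coord_upd i s q)))"
      by (rule cont[OF smooth_chart_pd[OF f]])
  next
    show "continuous_on (ball (coord i q) e \<times> ball (coord j q) e)
        (\<lambda>(s, t). uncurry4 (pd j (pd i f)) (coord_upd j t (coord_upd i s q)))"
      by (rule cont[OF smooth_chart_pd[OF smooth_chart_pd[OF f]]])
  qed
  hence "uncurry4 (pd i (pd j f)) q = uncurry4 (pd j (pd i f)) q" by simp
  thus ?thesis by (simp add: q_def)
qed simp

lemma oint_coord_line_has_derivative_upper:
  assumes U: "open U" and f: "continuous_on U (uncurry4 f)"
    and seg: "\<And>n. n \<in> closed_segment a b \<Longrightarrow> coord_upd k n q \<in> U"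
  shows "((\<lambda>w. oint a w (\<lambda>n. uncurry4 f (coord_upd k n q))) has_real_derivative
      uncurry4 f (coord_upd k b q)) (at b)"
proof (rule oint_has_derivative_upper)
  show "open ((\<lambda>n. coord_upd k n q) -` U)"
    by (intro open_vimage U continuous_on_coord_upd)
  show "continuous_on ((\<lambda>n. coord_upd k n q) -` U) (\<lambda>n. uncurry4 f (coord_upd k n q))"
    using continuous_on_compose[OF continuous_on_coord_upd continuous_on_subset[OF f]]
    by (auto simp: o_def)
qed (use seg in auto)

lemma oint_coord_line_has_derivative_param:
  assumes U: "open U" and f: "smooth_chart U f" and ik: "i < 4" "k < 4" "i \<noteq> k"
    and seg: "\<And>n. n \<in> closed_segment a b \<Longrightarrow> coord_upd k n q \<in> U"
  shows "((\<lambda>w. oint a b (\<lambda>n. uncurry4 f (coord_upd i w (coord_upd k n q)))) has_real_derivative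
      oint a b (\<lambda>n. uncurry4 (pd i f) (coord_upd k n q))) (at (coord i q))"
proof -
  have swap: "coord_upd i w (coord_upd k n q) = coord_upd k n (coord_upd i w q)" for w n
    using ik by (simp add: coord_upd_commute)
  define W where "W = (\<lambda>(w, n). coord_upd k n (coord_upd i w q)) -` U"
  have cont: "continuous_on W (\<lambda>(w, n). uncurry4 h (coord_upd i w (coord_upd k n q)))"
    if "smooth_chart U h" for h
  proof -
    have "(\<lambda>(w, n). coord_upd k n (coord_upd i w q)) ` W \<subseteq> U" by (auto simp: W_def)
    from continuous_on_compose2[OF smooth_chart_continuous_on[OF that] continuous_on_coord_upd2 this]
    show ?thesis by (simp add: split_beta swap)
  qed
  have "((\<lambda>w. oint a b (\<lambda>n. uncurry4 f (coord_upd i w (coord_upd k n q)))) has_real_derivative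
      oint a b (\<lambda>n. uncurry4 (pd i f) (coord_upd i (coord i q) (coord_upd k n q)))) (at (coord i q))"
  proof (rule oint_has_derivative_param[where W = W])
    show "open W" unfolding W_def by (intro open_vimage U continuous_on_coord_upd2)
    show "{coord i q} \<times> closed_segment a b \<subseteq> W"
      using seg by (auto simp: W_def)
  next
    fix w n assume "(w, n) \<in> W"
    hence "coord_upd i w (coord_upd k n q) \<in> U" by (simp add: W_def swap)
    from smooth_chart_has_real_derivative_coord_upd[OF f this ik(1)]
    show "((\<lambda>w. uncurry4 f (coord_upd i w (coord_upd k n q))) has_real_derivative
        uncurry4 (pd i f) (coord_upd i w (coord_upd k n q))) (at w)"
      using ik by simp
  qed (intro cont f smooth_chart_pd)+
  thus ?thesis by (simp add: swap)
qed

lemma pd_eqI: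
  assumes "i < 4" "((\<lambda>w. uncurry4 f (coord_upd i w (x, y, u, v))) has_real_derivative D) (at (coord i (x, y, u, v)))"
  shows "pd i f x y u v = D"
  using assms DERIV_imp_deriv by (auto simp: pd_def less_4_cases)

lemma admissible_domain_segments:
  assumes "admissible_domain U" "(x, y, u, v) \<in> U"
  shows "n \<in> closed_segment 0 u \<Longrightarrow> (x, y, n, v) \<in> U"
    and "s \<in> closed_segment 0 v \<Longrightarrow> (x, y, 0, s) \<in> U"
  using assms unfolding admissible_domain_def by fast+

definition kappa_coeff :: "chartfun \<Rightarrow> chartfun \<Rightarrow> chartfun" where
  "kappa_coeff P Q x y u v = - (oint 0 u (\<lambda>n. P x y n v) + oint 0 v (\<lambda>s. Q x y 0 s))"

lemma kappa_components:
  "kappa Bxx Bxy Byy 0 = kappa_coeff Bxx Bxy"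
  "kappa Bxx Bxy Byy 1 = kappa_coeff Bxy Byy"
  "i \<ge> 2 \<Longrightarrow> kappa Bxx Bxy Byy i = (\<lambda>x y u v. 0)"
  by (auto simp: kappa_def add1_def fscale1_def dq_def kappa_coeff_def fun_eq_iff)

lemma kappa_coeff_eq_potential_diff:
  assumes "\<And>n. n \<in> closed_segment 0 u \<Longrightarrow> ((\<lambda>s. F x y s v) has_real_derivative P x y n v) (at n)"
    and "\<And>s. s \<in> closed_segment 0 v \<Longrightarrow> ((\<lambda>t. F x y 0 t) has_real_derivative Q x y 0 s) (at s)"
  shows "kappa_coeff P Q x y u v = F x y 0 0 - F x y u v"
  using oint_ftc[OF assms(1)] oint_ftc[OF assms(2)] by (simp add: kappa_coeff_def)

context
  fixes U P Q x y u v
  assumes U: "admissible_domain U" and P: "smooth_chart U P" and Q: "smooth_chart U Q"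
    and p: "(x, y, u, v) \<in> U"
begin

lemma pd_2_kappa_coeff: "pd 2 (kappa_coeff P Q) x y u v = - P x y u v"
proof (rule pd_eqI)
  have "((\<lambda>w. oint 0 w (\<lambda>n. uncurry4 P (coord_upd 2 n (x, y, u, v)))) has_real_derivative
      uncurry4 P (coord_upd 2 u (x, y, u, v))) (at u)"
    using admissible_domain_segments[OF U p] U
    by (intro oint_coord_line_has_derivative_upper[OF _ smooth_chart_continuous_on[OF P]])
       (auto simp: admissible_domain_def)
  thus "((\<lambda>w. uncurry4 (kappa_coeff P Q) (coord_upd 2 w (x, y, u, v))) has_real_derivative - P x y u v)
      (at (coord 2 (x, y, u, v)))"
    by (auto simp: kappa_coeff_def intro!: derivative_eq_intros)
qed simp

lemma pd_3_kappa_coeff: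
  assumes PQ: "\<forall>(x, y, u, v) \<in> U. pd 3 P x y u v = pd 2 Q x y u v"
  shows "pd 3 (kappa_coeff P Q) x y u v = - Q x y u v"
proof (rule pd_eqI)
  have "open U" using U by (simp add: admissible_domain_def)
  have "((\<lambda>w. oint 0 u (\<lambda>n. uncurry4 P (coord_upd 3 w (coord_upd 2 n (x, y, u, v))))) has_real_derivative
      oint 0 u (\<lambda>n. uncurry4 (pd 3 P) (coord_upd 2 n (x, y, u, v)))) (at (coord 3 (x, y, u, v)))"
    using admissible_domain_segments[OF U p]
    by (intro oint_coord_line_has_derivative_param[OF \<open>open U\<close> P]) auto
  moreover have "((\<lambda>w. oint 0 w (\<lambda>s. uncurry4 Q (coord_upd 3 s (x, y, 0, v)))) has_real_derivative
      uncurry4 Q (coord_upd 3 v (x, y, 0, v))) (at v)"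
    using admissible_domain_segments[OF U p]
    by (intro oint_coord_line_has_derivative_upper[OF \<open>open U\<close> smooth_chart_continuous_on[OF Q]]) auto
  ultimately have "((\<lambda>w. uncurry4 (kappa_coeff P Q) (coord_upd 3 w (x, y, u, v))) has_real_derivative
      - (oint 0 u (\<lambda>n. pd 3 P x y n v) + Q x y 0 v)) (at (coord 3 (x, y, u, v)))"
    by (auto simp: kappa_coeff_def intro!: derivative_eq_intros)
  moreover have "oint 0 u (\<lambda>n. pd 3 P x y n v) = oint 0 u (\<lambda>n. pd 2 Q x y n v)"
    using PQ admissible_domain_segments[OF U p] by (intro oint_cong) fastforce
  moreover have "oint 0 u (\<lambda>n. pd 2 Q x y n v) = Q x y u v - Q x y 0 v"
    using smooth_chart_has_real_derivative_pd(3)[OF Q admissible_domain_segments(1)[OF U p]]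
    by (intro oint_ftc)
  ultimately show "((\<lambda>w. uncurry4 (kappa_coeff P Q) (coord_upd 3 w (x, y, u, v))) has_real_derivative
      - Q x y u v) (at (coord 3 (x, y, u, v)))"
    by simp
qed simp

lemma pd_base_kappa_coeff:
  assumes i: "i < 2"
  shows "pd i (kappa_coeff P Q) x y u v = kappa_coeff (pd i P) (pd i Q) x y u v"
proof (rule pd_eqI)
  have "open U" using U by (simp add: admissible_domain_def)
  have "((\<lambda>w. oint 0 u (\<lambda>n. uncurry4 P (coord_upd i w (coord_upd 2 n (x, y, u, v))))) has_real_derivative
      oint 0 u (\<lambda>n. uncurry4 (pd i P) (coord_upd 2 n (x, y, u, v)))) (at (coord i (x, y, u, v)))"
    using admissible_domain_segments[OF U p] i
    by (intro oint_coord_line_has_derivative_param[OF \<open>open U\<close> P]) auto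
  moreover have "((\<lambda>w. oint 0 v (\<lambda>s. uncurry4 Q (coord_upd i w (coord_upd 3 s (x, y, 0, v))))) has_real_derivative
      oint 0 v (\<lambda>s. uncurry4 (pd i Q) (coord_upd 3 s (x, y, 0, v)))) (at (coord i (x, y, 0, v)))"
    using admissible_domain_segments[OF U p] i
    by (intro oint_coord_line_has_derivative_param[OF \<open>open U\<close> Q]) auto
  moreover have "coord i (x, y, 0, v) = coord i (x, y, u, v)" using i by simp
  ultimately have "((\<lambda>w. - (oint 0 u (\<lambda>n. uncurry4 P (coord_upd i w (coord_upd 2 n (x, y, u, v))))
               + oint 0 v (\<lambda>s. uncurry4 Q (coord_upd i w (coord_upd 3 s (x, y, 0, v))))))
      has_real_derivative - (oint 0 u (\<lambda>n. uncurry4 (pd i P) (coord_upd 2 n (x, y, u, v)))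
               + oint 0 v (\<lambda>s. uncurry4 (pd i Q) (coord_upd 3 s (x, y, 0, v))))) (at (coord i (x, y, u, v)))"
    by (intro DERIV_minus DERIV_add) auto
  moreover have "uncurry4 (kappa_coeff P Q) (coord_upd i w (x, y, u, v)) =
      - (oint 0 u (\<lambda>n. uncurry4 P (coord_upd i w (coord_upd 2 n (x, y, u, v))))
         + oint 0 v (\<lambda>s. uncurry4 Q (coord_upd i w (coord_upd 3 s (x, y, 0, v)))))" for w
    using i by (auto simp: kappa_coeff_def less_2_cases)
  ultimately show "((\<lambda>w. uncurry4 (kappa_coeff P Q) (coord_upd i w (x, y, u, v))) has_real_derivative
      kappa_coeff (pd i P) (pd i Q) x y u v) (at (coord i (x, y, u, v)))"
    by (simp add: kappa_coeff_def)
qed (use i in simp)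

lemma kappa_coeff_diff:
  assumes "smooth_chart U P'" "smooth_chart U Q'"
  shows "kappa_coeff P Q x y u v - kappa_coeff P' Q' x y u v =
    kappa_coeff (\<lambda>x y u v. P x y u v - P' x y u v) (\<lambda>x y u v. Q x y u v - Q' x y u v) x y u v"
proof -
  have line: "continuous_on (closed_segment 0 u) (\<lambda>n. f x y n v)" if "smooth_chart U f" for f
  proof -
    have "(\<lambda>n. (x, y, n, v)) ` closed_segment 0 u \<subseteq> U"
      using admissible_domain_segments(1)[OF U p] by blast
    moreover have "continuous_on (closed_segment 0 u) (\<lambda>n. (x, y, n, v))" by (intro continuous_intros)
    ultimately show ?thesis using continuous_on_compose2[OF smooth_chart_continuous_on[OF that]] by fastforce
  qed
  have base: "continuous_on (closed_segment 0 v) (\<lambda>s. f x y 0 s)" if "smooth_chart U f" for f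
  proof -
    have "(\<lambda>s. (x, y, 0, s)) ` closed_segment 0 v \<subseteq> U"
      using admissible_domain_segments(2)[OF U p] by blast
    moreover have "continuous_on (closed_segment 0 v) (\<lambda>s. (x, y, 0, s))" by (intro continuous_intros)
    ultimately show ?thesis using continuous_on_compose2[OF smooth_chart_continuous_on[OF that]] by fastforce
  qed
  show ?thesis
    using P Q assms by (simp add: kappa_coeff_def oint_diff line base)
qed

end

locale variational_chart =
  fixes U :: "(real \<times> real \<times> real \<times> real) set" and Ax Ay Bxx Bxy Byy :: chartfun
  assumes admissible: "admissible_domain U"
    and smooth: "smooth_chart U Ax" "smooth_chart U Ay"
      "smooth_chart U Bxx" "smooth_chart U Bxy" "smooth_chart U Byy"
    and helmholtz: "helmholtz U Ax Ay Bxx Bxy Byy"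
begin

lemma open_domain: "open U"
  using admissible by (simp add: admissible_domain_def)

lemmas smooth_pd = smooth_chart_pd[OF smooth(1)] smooth_chart_pd[OF smooth(2)]
  smooth_chart_pd[OF smooth(3)] smooth_chart_pd[OF smooth(4)] smooth_chart_pd[OF smooth(5)]

lemma Dfun_has_derivative_2:
  assumes p: "(x, y, u, v) \<in> U"
  shows "((\<lambda>s. Dfun Ax Ay x y s v) has_real_derivative 2 * (pd 1 Bxx x y u v - pd 0 Bxy x y u v)) (at u)"
proof -
  note vanish = has_real_derivative_zero_if_vanishing_on[OF open_domain]
  note d = smooth_chart_has_real_derivative_pd[OF _ p]
  \<comment> \<open>hNk: the N-th Helmholtz condition differentiated in the variable k\<close>
  have h1x: "pd 0 (pd 3 Bxx) x y u v - pd 0 (pd 2 Bxy) x y u v = 0"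
    by (rule vanish[where g = "\<lambda>(x, y, u, v). pd 3 Bxx x y u v - pd 2 Bxy x y u v"
          and h = "\<lambda>s. (s, y, u, v)"])
       (use helmholtz p in \<open>auto simp: helmholtz_def intro!: continuous_intros derivative_eq_intros d smooth_pd\<close>)
  have h1y: "pd 1 (pd 3 Bxx) x y u v - pd 1 (pd 2 Bxy) x y u v = 0"
    by (rule vanish[where g = "\<lambda>(x, y, u, v). pd 3 Bxx x y u v - pd 2 Bxy x y u v"
          and h = "\<lambda>s. (x, s, u, v)"])
       (use helmholtz p in \<open>auto simp: helmholtz_def intro!: continuous_intros derivative_eq_intros d smooth_pd\<close>)
  have h3v: "pd 3 (pd 2 Ax) x y u v - u * pd 3 (pd 0 Bxx) x y u v
      - (pd 1 Bxx x y u v + v * pd 3 (pd 1 Bxx) x y u v) = 0"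
    by (rule vanish[where g = "\<lambda>(x, y, u, v). pd 2 Ax x y u v - u * pd 0 Bxx x y u v - v * pd 1 Bxx x y u v"
          and h = "\<lambda>s. (x, y, u, s)"])
       (use helmholtz p in \<open>auto simp: helmholtz_def intro!: continuous_intros derivative_eq_intros d smooth_pd\<close>)
  have h5u: "pd 2 (pd 3 Ax) x y u v + pd 2 (pd 2 Ay) x y u v
      - 2 * (pd 0 Bxy x y u v + u * pd 2 (pd 0 Bxy) x y u v) - 2 * v * pd 2 (pd 1 Bxy) x y u v = 0"
    by (rule vanish[where g = "\<lambda>(x, y, u, v). pd 3 Ax x y u v + pd 2 Ay x y u v
          - 2 * u * pd 0 Bxy x y u v - 2 * v * pd 1 Bxy x y u v" and h = "\<lambda>s. (x, y, s, v)"])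
       (use helmholtz p in \<open>auto simp: helmholtz_def intro!: continuous_intros derivative_eq_intros d smooth_pd\<close>)
  note commute = pd_commute[OF open_domain _ p]
  have "((\<lambda>s. Dfun Ax Ay x y s v) has_real_derivative pd 2 (pd 3 Ax) x y u v - pd 2 (pd 2 Ay) x y u v) (at u)"
    unfolding Dfun_def by (intro derivative_intros d smooth_pd)
  moreover have "pd 2 (pd 3 Ax) x y u v - pd 2 (pd 2 Ay) x y u v = 2 * (pd 1 Bxx x y u v - pd 0 Bxy x y u v)"
    using h1x h1y h3v h5u commute[OF smooth(1), of 2 3] commute[OF smooth(3), of 3 0]
      commute[OF smooth(3), of 3 1] commute[OF smooth(4), of 2 0] commute[OF smooth(4), of 2 1]
    by (simp add: algebra_simps)
  ultimately show ?thesis by simp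
qed

lemma Dfun_has_derivative_3:
  assumes p: "(x, y, u, v) \<in> U"
  shows "((\<lambda>s. Dfun Ax Ay x y u s) has_real_derivative 2 * (pd 1 Bxy x y u v - pd 0 Byy x y u v)) (at v)"
proof -
  note vanish = has_real_derivative_zero_if_vanishing_on[OF open_domain]
  note d = smooth_chart_has_real_derivative_pd[OF _ p]
  have h2x: "pd 0 (pd 2 Byy) x y u v - pd 0 (pd 3 Bxy) x y u v = 0"
    by (rule vanish[where g = "\<lambda>(x, y, u, v). pd 2 Byy x y u v - pd 3 Bxy x y u v"
          and h = "\<lambda>s. (s, y, u, v)"])
       (use helmholtz p in \<open>auto simp: helmholtz_def intro!: continuous_intros derivative_eq_intros d smooth_pd\<close>)
  have h2y: "pd 1 (pd 2 Byy) x y u v - pd 1 (pd 3 Bxy) x y u v = 0"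
    by (rule vanish[where g = "\<lambda>(x, y, u, v). pd 2 Byy x y u v - pd 3 Bxy x y u v"
          and h = "\<lambda>s. (x, s, u, v)"])
       (use helmholtz p in \<open>auto simp: helmholtz_def intro!: continuous_intros derivative_eq_intros d smooth_pd\<close>)
  have h4u: "pd 2 (pd 3 Ay) x y u v - (pd 0 Byy x y u v + u * pd 2 (pd 0 Byy) x y u v)
      - v * pd 2 (pd 1 Byy) x y u v = 0"
    by (rule vanish[where g = "\<lambda>(x, y, u, v). pd 3 Ay x y u v - u * pd 0 Byy x y u v - v * pd 1 Byy x y u v"
          and h = "\<lambda>s. (x, y, s, v)"])
       (use helmholtz p in \<open>auto simp: helmholtz_def intro!: continuous_intros derivative_eq_intros d smooth_pd\<close>)
  have h5v: "pd 3 (pd 3 Ax) x y u v + pd 3 (pd 2 Ay) x y u v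
      - 2 * u * pd 3 (pd 0 Bxy) x y u v - 2 * (pd 1 Bxy x y u v + v * pd 3 (pd 1 Bxy) x y u v) = 0"
    by (rule vanish[where g = "\<lambda>(x, y, u, v). pd 3 Ax x y u v + pd 2 Ay x y u v
          - 2 * u * pd 0 Bxy x y u v - 2 * v * pd 1 Bxy x y u v" and h = "\<lambda>s. (x, y, u, s)"])
       (use helmholtz p in \<open>auto simp: helmholtz_def intro!: continuous_intros derivative_eq_intros d smooth_pd\<close>)
  note commute = pd_commute[OF open_domain _ p]
  have "((\<lambda>s. Dfun Ax Ay x y u s) has_real_derivative pd 3 (pd 3 Ax) x y u v - pd 3 (pd 2 Ay) x y u v) (at v)"
    unfolding Dfun_def by (intro derivative_intros d smooth_pd)
  moreover have "pd 3 (pd 3 Ax) x y u v - pd 3 (pd 2 Ay) x y u v = 2 * (pd 1 Bxy x y u v - pd 0 Byy x y u v)"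
    using h2x h2y h4u h5v commute[OF smooth(2), of 3 2] commute[OF smooth(5), of 2 0]
      commute[OF smooth(5), of 2 1] commute[OF smooth(4), of 3 0] commute[OF smooth(4), of 3 1]
    by (simp add: algebra_simps)
  ultimately show ?thesis by simp
qed

lemma kappa_coeff_curl:
  assumes p: "(x, y, u, v) \<in> U"
  shows "pd 0 (kappa_coeff Bxy Byy) x y u v - pd 1 (kappa_coeff Bxx Bxy) x y u v =
    1/2 * Dfun Ax Ay x y u v - 1/2 * Dfun Ax Ay x y 0 0"
proof -
  have "pd 0 (kappa_coeff Bxy Byy) x y u v - pd 1 (kappa_coeff Bxx Bxy) x y u v =
      kappa_coeff (\<lambda>x y u v. pd 0 Bxy x y u v - pd 1 Bxx x y u v)
        (\<lambda>x y u v. pd 0 Byy x y u v - pd 1 Bxy x y u v) x y u v"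
    using admissible smooth p smooth_pd
    by (simp add: pd_base_kappa_coeff kappa_coeff_diff)
  also have "\<dots> = - 1/2 * Dfun Ax Ay x y 0 0 - (- 1/2 * Dfun Ax Ay x y u v)"
  proof (rule kappa_coeff_eq_potential_diff)
    fix n assume "n \<in> closed_segment 0 u"
    hence "(x, y, n, v) \<in> U" by (rule admissible_domain_segments[OF admissible p])
    thus "((\<lambda>s. - 1/2 * Dfun Ax Ay x y s v) has_real_derivative pd 0 Bxy x y n v - pd 1 Bxx x y n v) (at n)"
      using DERIV_cmult[OF Dfun_has_derivative_2, of x y n v "- 1/2"] by (simp add: algebra_simps)
  next
    fix s assume "s \<in> closed_segment 0 v"
    hence "(x, y, 0, s) \<in> U" by (rule admissible_domain_segments[OF admissible p])
    thus "((\<lambda>t. - 1/2 * Dfun Ax Ay x y 0 t) has_real_derivative pd 0 Byy x y 0 s - pd 1 Bxy x y 0 s) (at s)"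
      using DERIV_cmult[OF Dfun_has_derivative_3, of x y 0 s "- 1/2"] by (simp add: algebra_simps)
  qed
  finally show ?thesis by simp
qed

lemma alpha'_minus_omega0_eq_ext_d_kappa:
  "eq2_on U (diff2 (alpha' Ax Ay Bxx Bxy Byy) (omega0 Ax Ay)) (ext_d (kappa Bxx Bxy Byy))"
  unfolding eq2_on_def
proof (intro allI impI, clarify)
  fix i j x y u v assume ij: "i < (4::nat)" "j < (4::nat)" and p: "(x, y, u, v) \<in> U"
  have H1: "\<forall>(x, y, u, v) \<in> U. pd 3 Bxx x y u v = pd 2 Bxy x y u v"
    and H2: "\<forall>(x, y, u, v) \<in> U. pd 3 Bxy x y u v = pd 2 Byy x y u v"
    using helmholtz unfolding helmholtz_def by auto
  have K: "pd 2 (kappa_coeff Bxx Bxy) x y u v = - Bxx x y u v"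
    "pd 2 (kappa_coeff Bxy Byy) x y u v = - Bxy x y u v"
    "pd 3 (kappa_coeff Bxx Bxy) x y u v = - Bxy x y u v"
    "pd 3 (kappa_coeff Bxy Byy) x y u v = - Byy x y u v"
    using pd_2_kappa_coeff[OF admissible _ _ p] pd_3_kappa_coeff[OF admissible _ _ p] smooth H1 H2
    by blast+
  have pd_zero: "pd k (\<lambda>x y u v. 0) x y u v = 0" for k by (simp add: pd_def)
  have curl: "pd 0 (kappa_coeff Bxy Byy) x y u v =
      pd 1 (kappa_coeff Bxx Bxy) x y u v + (1/2 * Dfun Ax Ay x y u v - 1/2 * Dfun Ax Ay x y 0 0)"
    using kappa_coeff_curl[OF p] by simp
  show "diff2 (alpha' Ax Ay Bxx Bxy Byy) (omega0 Ax Ay) i j x y u v = ext_d (kappa Bxx Bxy Byy) i j x y u v"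
    using ij unfolding less_4_cases
    by (elim disjE; simp add: diff2_def alpha'_def omega0_def add2_def fscale2_def wedge_def add1_def
        fscale1_def dq_def ext_d_def kappa_components kappa_components(2)[unfolded One_nat_def]
        K pd_zero curl)
qed

end

theorem theorem3p3:
  fixes U :: "(real \<times> real \<times> real \<times> real) set"
    and Ax Ay Bxx Bxy Byy :: chartfun
  assumes "admissible_domain U"
    and "smooth_chart U Ax" "smooth_chart U Ay"
    and "smooth_chart U Bxx" "smooth_chart U Bxy" "smooth_chart U Byy"
    and "helmholtz U Ax Ay Bxx Bxy Byy"
  shows "eq2_on U (diff2 (alpha' Ax Ay Bxx Bxy Byy) (omega0 Ax Ay)) (ext_d (kappa Bxx Bxy Byy))"
proof -
  interpret variational_chart U Ax Ay Bxx Bxy Byy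
    using assms by unfold_locales
  show ?thesis by (rule alpha'_minus_omega0_eq_ext_d_kappa)
qed

end
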